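(* Let $\Sigma$ be a finite alphabet, $\mathcal F\subseteq\Sigma^{\Sigma^*}$ a base class and $T\in\mathbb N_+$. If $\Sigma=\{0,1\}$, then $\mathrm{VCdim}(\mathcal F^{\mathrm{e2e}(T)})\le6\,T\cdot\mathrm{VCdim}(\mathcal F)$. For non-binary finite $\Sigma$, $$\mathrm{Ndim}(\mathcal F^{\mathrm{e2e}(T)})\le9\,T\cdot\mathrm{Ndim}(\mathcal F)\log_2\!\left(\frac{2\,\mathrm{Ndim}(\mathcal F)\,|\Sigma|}{e\ln2}\right).$$
   Context: For $f:\Sigma^*\to\Sigma$, $\bar f(\mathbf x)$ is $\mathbf x$ with $f(\mathbf x)$ appended; $f^{\mathrm{CoT}(T)}=\bar f^{\circ T}$; $f^{\mathrm{e2e}(T)}(\mathbf x)$ is the last token of $f^{\mathrm{CoT}(T)}(\mathbf x)$; $\mathcal F^{\mathrm{e2e}(T)}=\{f^{\mathrm{e2e}(T)}:f\in\mathcal F\}$ (classes of functions on $\Sigma^*$). $\mathrm{VCdim}$ is the VC dimension. Natarajan dimension $\mathrm{Ndim}(\mathcal H)$: the largest size of a set $S$ for which there are $h_0,h_1$ with $h_0(\mathbf x)\ne h_1(\mathbf x)$ for all $\mathbf x\in S$ such that for every $U\subseteq S$ some $h\in\mathcal H$ agrees with $h_0$ on $U$ and with $h_1$ on $S\setminus U$. *)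

theory Defs
  imports Complex_Main "HOL-Library.Extended_Nat"
begin

definition extend :: "('s list \<Rightarrow> 's) \<Rightarrow> 's list \<Rightarrow> 's list" where
  "extend f x = x @ [f x]"

definition CoT :: "nat \<Rightarrow> ('s list \<Rightarrow> 's) \<Rightarrow> 's list \<Rightarrow> 's list" where
  "CoT T f = (extend f) ^^ T"

definition e2e :: "nat \<Rightarrow> ('s list \<Rightarrow> 's) \<Rightarrow> 's list \<Rightarrow> 's" where
  "e2e T f x = last (CoT T f x)"

definition e2e_class :: "nat \<Rightarrow> ('s list \<Rightarrow> 's) set \<Rightarrow> ('s list \<Rightarrow> 's) set" where
  "e2e_class T F = e2e T ` F"

definition shatters :: "('a \<Rightarrow> bool) set \<Rightarrow> 'a set \<Rightarrow> bool" where
  "shatters H S \<longleftrightarrow> (\<forall>U \<subseteq> S. \<exists>h \<in> H. \<forall>x \<in> S. h x = (x \<in> U))"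

definition VCdim :: "('a \<Rightarrow> bool) set \<Rightarrow> enat" where
  "VCdim H = Sup {enat (card S) | S. finite S \<and> shatters H S}"

definition N_shatters :: "('a \<Rightarrow> 'b) set \<Rightarrow> 'a set \<Rightarrow> bool" where
  "N_shatters H S \<longleftrightarrow> (\<exists>h0 h1. (\<forall>x \<in> S. h0 x \<noteq> h1 x) \<and>
      (\<forall>U \<subseteq> S. \<exists>h \<in> H. (\<forall>x \<in> U. h x = h0 x) \<and> (\<forall>x \<in> S - U. h x = h1 x)))"

definition Ndim :: "('a \<Rightarrow> 'b) set \<Rightarrow> enat" where
  "Ndim H = Sup {enat (card S) | S. finite S \<and> N_shatters H S}"

end

theory Submission
  imports Defs "HOL-Library.FuncSet" "HOL-Analysis.Harmonic_Numbers"
begin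

text \<open>
  Producing T chain-of-thought tokens from an input s queries f only on the prompts s @ y with
  length y < T. On a set S of inputs the end-to-end function is therefore determined by the
  restriction of f to at most |S| (1 + k + ... + k^(T-1)) prompts, where k = |Sigma|. If the
  end-to-end class N-shatters S, the base class has at least 2^|S| distinct restrictions to these
  prompts, while by the Natarajan-Sauer lemma a class of Natarajan dimension d has at most
  sum_{i <= d} C(n, i) (k (k - 1))^i <= (3 k (k - 1) (n + d) / d)^d restrictions to n points.
  Comparing the exponential lower bound with this polynomial upper bound bounds |S|. For Boolean
  classes the VC and Natarajan dimensions coincide, and the Natarajan bound needs only k >= 2.
\<close>

section \<open>Shattering\<close>

lemma N_shatters_subset:
  assumes "N_shatters H S" "S' \<subseteq> S"
  shows "N_shatters H S'"
proof -
  obtain h0 h1 where sep: "\<forall>x\<in>S. h0 x \<noteq> h1 x"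
    and realise: "\<forall>U\<subseteq>S. \<exists>h\<in>H. (\<forall>x\<in>U. h x = h0 x) \<and> (\<forall>x\<in>S - U. h x = h1 x)"
    using assms(1) unfolding N_shatters_def by blast
  have "\<exists>h\<in>H. (\<forall>x\<in>U. h x = h0 x) \<and> (\<forall>x\<in>S' - U. h x = h1 x)" if "U \<subseteq> S'" for U
  proof -
    have "U \<subseteq> S" using that assms(2) by (rule order_trans)
    then obtain h where "h \<in> H" "\<forall>x\<in>U. h x = h0 x" "\<forall>x\<in>S - U. h x = h1 x"
      using realise by blast
    then show ?thesis using assms(2) by blast
  qed
  moreover have "\<forall>x\<in>S'. h0 x \<noteq> h1 x" using sep assms(2) by blast
  ultimately show ?thesis unfolding N_shatters_def by blast
qed

lemma N_shatters_iff_shatters: "N_shatters (H :: ('a \<Rightarrow> bool) set) S \<longleftrightarrow> shatters H S"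
proof
  assume sh: "shatters H S"
  have "\<exists>h\<in>H. (\<forall>x\<in>U. h x = True) \<and> (\<forall>x\<in>S - U. h x = False)" if U: "U \<subseteq> S" for U
  proof -
    obtain h where "h \<in> H" "\<forall>x\<in>S. h x = (x \<in> U)"
      using sh[unfolded shatters_def, rule_format, OF U] ..
    then show ?thesis using U by (intro bexI[of _ h]) auto
  qed
  then show "N_shatters H S"
    unfolding N_shatters_def by (intro exI[of _ "\<lambda>_. True"] exI[of _ "\<lambda>_. False"]) simp
next
  assume "N_shatters H S"
  then obtain h0 h1 where sep: "\<forall>x\<in>S. h0 x \<noteq> h1 x"
    and realise: "\<forall>U\<subseteq>S. \<exists>h\<in>H. (\<forall>x\<in>U. h x = h0 x) \<and> (\<forall>x\<in>S - U. h x = h1 x)"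
    unfolding N_shatters_def by blast
  have "\<exists>h\<in>H. \<forall>x\<in>S. h x = (x \<in> U)" for U
  proof -
    define V where "V = {x\<in>S. h0 x = (x \<in> U)}"
    have "V \<subseteq> S" unfolding V_def by blast
    then obtain h where h: "h \<in> H" "\<forall>x\<in>V. h x = h0 x" "\<forall>x\<in>S - V. h x = h1 x"
      using realise by blast
    have "h x = (x \<in> U)" if "x \<in> S" for x
    proof (cases "x \<in> V")
      case True
      then show ?thesis using h(2) unfolding V_def by simp
    next
      case False
      then show ?thesis using h(3) sep that unfolding V_def by (cases "h0 x") auto
    qed
    then show ?thesis using h(1) by auto
  qed
  then show "shatters H S" unfolding shatters_def by simp
qed

lemma VCdim_eq_Ndim: "VCdim (H :: ('a \<Rightarrow> bool) set) = Ndim H"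
  unfolding VCdim_def Ndim_def N_shatters_iff_shatters ..

lemma card_le_if_Ndim_le:
  assumes "Ndim H \<le> enat d" "finite S" "N_shatters H S"
  shows "card S \<le> d"
proof -
  have "enat (card S) \<le> Ndim H"
    unfolding Ndim_def by (rule Sup_upper) (use assms in blast)
  then show ?thesis using assms(1) by (metis enat_ord_simps(1) order_trans)
qed

lemma Ndim_le_enatI:
  assumes "\<And>S. finite S \<Longrightarrow> N_shatters H S \<Longrightarrow> card S \<le> d"
  shows "Ndim H \<le> enat d"
  unfolding Ndim_def by (rule Sup_least) (use assms in auto)

lemma Ndim_eq_enat_le_if_card_le:
  fixes B :: real
  assumes "0 \<le> B" "\<And>S. finite S \<Longrightarrow> N_shatters H S \<Longrightarrow> real (card S) \<le> B"
  shows "\<exists>n. Ndim H = enat n \<and> real n \<le> B"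
proof -
  have "Ndim H \<le> enat (nat \<lfloor>B\<rfloor>)"
    by (rule Ndim_le_enatI) (use assms(2) in \<open>simp add: le_nat_floor\<close>)
  then obtain n where "Ndim H = enat n" "n \<le> nat \<lfloor>B\<rfloor>"
    by (metis enat_ile enat_ord_simps(1))
  moreover from \<open>n \<le> nat \<lfloor>B\<rfloor>\<close> have "real n \<le> B" using assms(1) by linarith
  ultimately show ?thesis by blast
qed

lemma Ndim_eq_0_if_CARD_eq_1:
  assumes "CARD('b) = 1"
  shows "Ndim (H :: ('a \<Rightarrow> 'b::finite) set) = 0"
proof -
  have "a = b" for a b :: 'b using assms by (metis card_1_singletonE singletonD UNIV_I)
  then have "N_shatters H S \<Longrightarrow> S = {}" for S unfolding N_shatters_def by blast
  then have "Ndim H \<le> enat 0" by (intro Ndim_le_enatI) auto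
  then show ?thesis by (simp add: zero_enat_def[symmetric])
qed

section \<open>Restrictions and the Natarajan-Sauer lemma\<close>

definition restrictions :: "('a \<Rightarrow> 'b) set \<Rightarrow> 'a set \<Rightarrow> ('a \<Rightarrow> 'b) set" where
  "restrictions H Q = (\<lambda>h. restrict h Q) ` H"

lemma finite_restrictions:
  assumes "finite Q"
  shows "finite (restrictions (H :: ('a \<Rightarrow> 'b::finite) set) Q)"
proof (rule finite_subset)
  show "restrictions H Q \<subseteq> Q \<rightarrow>\<^sub>E UNIV" unfolding restrictions_def by auto
  show "finite (Q \<rightarrow>\<^sub>E (UNIV :: 'b set))" using assms by (intro finite_PiE) auto
qed

lemma two_pow_card_le_card_restrictions:
  fixes H :: "('a \<Rightarrow> 'b::finite) set"
  assumes "finite S" "N_shatters H S"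
  shows "2 ^ card S \<le> card (restrictions H S)"
proof -
  obtain h0 h1 where sep: "\<forall>x\<in>S. h0 x \<noteq> h1 x"
    and realise: "\<forall>U\<subseteq>S. \<exists>h\<in>H. (\<forall>x\<in>U. h x = h0 x) \<and> (\<forall>x\<in>S - U. h x = h1 x)"
    using assms(2) unfolding N_shatters_def by blast
  then obtain h where h: "\<And>U. U \<subseteq> S \<Longrightarrow> h U \<in> H \<and> (\<forall>x\<in>U. h U x = h0 x) \<and> (\<forall>x\<in>S - U. h U x = h1 x)"
    by metis
  have recover: "U = {x\<in>S. restrict (h U) S x = h0 x}" if "U \<subseteq> S" for U
    using h[OF that] sep that by (auto, metis DiffI)
  have "inj_on (\<lambda>U. restrict (h U) S) (Pow S)"
    by (rule inj_on_inverseI[where g = "\<lambda>r. {x\<in>S. r x = h0 x}"]) (use recover in auto)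
  then have "card (Pow S) \<le> card (restrictions H S)"
    by (rule card_inj_on_le) (use h finite_restrictions[OF assms(1)] in \<open>auto simp: restrictions_def\<close>)
  then show ?thesis using assms(1) by (simp add: card_Pow)
qed

definition twins :: "('a \<Rightarrow> 'b) set \<Rightarrow> 'a set \<Rightarrow> 'a \<Rightarrow> 'b \<Rightarrow> 'b \<Rightarrow> ('a \<Rightarrow> 'b) set" where
  "twins H Q x a b = {h \<in> H. h x = a \<and> (\<exists>h'\<in>H. h' x = b \<and> (\<forall>q\<in>Q. h' q = h q))}"

lemma N_shatters_insert_if_N_shatters_twins:
  assumes "S \<subseteq> Q" "x \<notin> Q" "a \<noteq> b" "N_shatters (twins H Q x a b) S"
  shows "N_shatters H (insert x S)"
proof -
  obtain h0 h1 where sep: "\<forall>y\<in>S. h0 y \<noteq> h1 y"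
    and realise: "\<forall>U\<subseteq>S. \<exists>h\<in>twins H Q x a b. (\<forall>y\<in>U. h y = h0 y) \<and> (\<forall>y\<in>S - U. h y = h1 y)"
    using assms(4) unfolding N_shatters_def by blast
  have x: "x \<notin> S" using assms(1,2) by blast
  have "\<exists>h\<in>H. (\<forall>y\<in>U. h y = (h0(x := a)) y) \<and> (\<forall>y\<in>insert x S - U. h y = (h1(x := b)) y)"
    if U: "U \<subseteq> insert x S" for U
  proof -
    have "U - {x} \<subseteq> S" using U by blast
    then obtain h where h: "h \<in> twins H Q x a b" "\<forall>y\<in>U - {x}. h y = h0 y" "\<forall>y\<in>S - (U - {x}). h y = h1 y"
      using realise by blast
    then obtain h' where h': "h \<in> H" "h x = a" "h' \<in> H" "h' x = b" "\<forall>q\<in>Q. h' q = h q"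
      unfolding twins_def by blast
    show ?thesis
    proof (cases "x \<in> U")
      case True
      then show ?thesis using h h' x by (intro bexI[of _ h]) auto
    next
      case False
      then show ?thesis using h h' x U assms(1) by (intro bexI[of _ h']) auto
    qed
  qed
  moreover have "\<forall>y\<in>insert x S. (h0(x := a)) y \<noteq> (h1(x := b)) y" using sep x assms(3) by auto
  ultimately show ?thesis unfolding N_shatters_def by blast
qed

lemma restrict_mem_restrictions:
  assumes "g \<in> restrictions H Q'" "Q \<subseteq> Q'"
  shows "restrict g Q \<in> restrictions H Q"
  using assms unfolding restrictions_def by (auto simp: Int_absorb1)

lemma restrictions_insert_eqI:
  assumes "g1 \<in> restrictions H (insert x Q)" "g2 \<in> restrictions H (insert x Q)"
    and "restrict g1 Q = restrict g2 Q" "g1 x = g2 x"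
  shows "g1 = g2"
proof
  fix y
  obtain h1 h2 where g: "g1 = restrict h1 (insert x Q)" "g2 = restrict h2 (insert x Q)"
    using assms(1,2) unfolding restrictions_def by auto
  show "g1 y = g2 y"
  proof (cases "y \<in> Q")
    case True
    then show ?thesis using fun_cong[OF assms(3), of y] by simp
  next
    case False
    then show ?thesis using assms(4) g by (cases "y = x") auto
  qed
qed

lemma card_non_representatives_le:
  fixes H :: "('a \<Rightarrow> 'b::finite) set"
  assumes "finite Q"
    and rep: "\<And>g. g \<in> restrictions H (insert x Q) \<Longrightarrow>
      rep (restrict g Q) \<in> restrictions H (insert x Q) \<and> restrict (rep (restrict g Q)) Q = restrict g Q"
  shows "card {g \<in> restrictions H (insert x Q). rep (restrict g Q) \<noteq> g}
    \<le> (\<Sum>(a, b)\<in>{(a, b). a \<noteq> b}. card (restrictions (twins H Q x a b) Q))"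
proof -
  define R where "R = restrictions H (insert x Q)"
  define N where "N = {g \<in> R. rep (restrict g Q) \<noteq> g}"
  define B where "B = Sigma {(a, b). a \<noteq> b} (\<lambda>(a, b). restrictions (twins H Q x a b) Q)"
  \<comment> \<open>A non-representative is determined by its trace on \<open>Q\<close> and its value at \<open>x\<close>, which
    differs from that of the representative; the trace is then one of a twin.\<close>
  have "inj_on (\<lambda>g. ((rep (restrict g Q) x, g x), restrict g Q)) N"
  proof (rule inj_onI)
    fix g1 g2 assume "g1 \<in> N" "g2 \<in> N"
      and "((rep (restrict g1 Q) x, g1 x), restrict g1 Q) = ((rep (restrict g2 Q) x, g2 x), restrict g2 Q)"
    then show "g1 = g2" using restrictions_insert_eqI[of g1 H x Q g2] unfolding N_def R_def by simp
  qed
  moreover have "(\<lambda>g. ((rep (restrict g Q) x, g x), restrict g Q)) ` N \<subseteq> B"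
  proof clarify
    fix g assume g: "g \<in> N"
    obtain h where h: "h \<in> H" "g = restrict h (insert x Q)"
      using g unfolding N_def R_def restrictions_def by auto
    have rep_g: "rep (restrict g Q) \<in> R" "restrict (rep (restrict g Q)) Q = restrict g Q"
      using rep g unfolding N_def R_def by auto
    obtain h' where h': "h' \<in> H" "rep (restrict g Q) = restrict h' (insert x Q)"
      using rep_g(1) unfolding R_def restrictions_def by blast
    have agree: "\<forall>q\<in>Q. h q = h' q"
      using rep_g(2) h h' by (metis insertCI restrict_apply')
    have "h' x \<noteq> h x"
      using restrictions_insert_eqI[of "rep (restrict g Q)" H x Q g] rep_g g h h'
      unfolding N_def R_def by auto
    moreover have "h' \<in> twins H Q x (h' x) (h x)" unfolding twins_def using h h' agree by auto
    moreover have "restrict g Q = restrict h' Q" using h agree by (auto simp: restrict_def)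
    ultimately show "((rep (restrict g Q) x, g x), restrict g Q) \<in> B"
      unfolding B_def restrictions_def using h h' by auto
  qed
  moreover have "finite B"
    unfolding B_def using finite_restrictions[OF assms(1)] by (intro finite_SigmaI) auto
  ultimately have "card N \<le> card B" by (rule card_inj_on_le)
  also have "\<dots> = (\<Sum>(a, b)\<in>{(a, b). a \<noteq> b}. card (restrictions (twins H Q x a b) Q))"
    unfolding B_def by (subst card_SigmaI) (auto intro!: sum.cong finite_restrictions[OF assms(1)])
  finally show ?thesis unfolding N_def R_def .
qed

lemma card_restrictions_insert_le:
  fixes H :: "('a \<Rightarrow> 'b::finite) set"
  assumes "finite Q"
  shows "card (restrictions H (insert x Q)) \<le> card (restrictions H Q)
    + (\<Sum>(a, b)\<in>{(a, b). a \<noteq> b}. card (restrictions (twins H Q x a b) Q))"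
proof -
  define R where "R = restrictions H (insert x Q)"
  define rep where "rep g' = (SOME g. g \<in> R \<and> restrict g Q = g')" for g'
  have rep: "rep (restrict g Q) \<in> R \<and> restrict (rep (restrict g Q)) Q = restrict g Q" if "g \<in> R" for g
    unfolding rep_def by (rule someI[of _ g]) (use that in simp)
  have "inj_on (\<lambda>g. restrict g Q) {g \<in> R. rep (restrict g Q) = g}"
    by (rule inj_onI) (simp only: mem_Collect_eq)
  then have "card {g \<in> R. rep (restrict g Q) = g} \<le> card (restrictions H Q)"
    by (rule card_inj_on_le)
      (use restrict_mem_restrictions finite_restrictions[OF assms] in \<open>auto simp: R_def\<close>)
  moreover have "card {g \<in> R. rep (restrict g Q) \<noteq> g}
      \<le> (\<Sum>(a, b)\<in>{(a, b). a \<noteq> b}. card (restrictions (twins H Q x a b) Q))"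
    using assms rep unfolding R_def by (rule card_non_representatives_le)
  moreover have "finite R" unfolding R_def using assms by (intro finite_restrictions) simp
  then have "card R = card {g \<in> R. rep (restrict g Q) = g} + card {g \<in> R. rep (restrict g Q) \<noteq> g}"
    using card_Int_Diff[of R "{g. rep (restrict g Q) = g}"] by (simp add: Int_def set_diff_eq)
  ultimately show ?thesis unfolding R_def by linarith
qed

lemma card_pairs_neq: "card {(a :: 'b::finite, b). a \<noteq> b} = CARD('b) * (CARD('b) - 1)"
proof -
  have "{(a :: 'b, b). a \<noteq> b} = UNIV - (\<lambda>a. (a, a)) ` UNIV" by auto
  moreover have "card ((\<lambda>a :: 'b. (a, a)) ` UNIV) = CARD('b)" by (rule card_image) (simp add: inj_on_def)
  moreover have "CARD('b \<times> 'b) = CARD('b) * CARD('b)"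
    by (simp add: card_cartesian_product flip: UNIV_Times_UNIV)
  ultimately show ?thesis
    by (simp add: card_Diff_subset diff_mult_distrib2)
qed

lemma sum_choose_Suc_mult_pow:
  fixes K :: nat
  shows "(\<Sum>i\<le>Suc e. (Suc n choose i) * K ^ i)
    = (\<Sum>i\<le>Suc e. (n choose i) * K ^ i) + K * (\<Sum>i\<le>e. (n choose i) * K ^ i)"
proof (induction e)
  case 0
  then show ?case by simp
next
  case (Suc e)
  then show ?case by (simp add: algebra_simps)
qed

lemma card_restrictions_le_sum_choose:
  fixes H :: "('a \<Rightarrow> 'b::finite) set"
  assumes "finite Q" "\<And>S. S \<subseteq> Q \<Longrightarrow> N_shatters H S \<Longrightarrow> card S \<le> d"
  shows "card (restrictions H Q) \<le> (\<Sum>i\<le>d. (card Q choose i) * (CARD('b) * (CARD('b) - 1)) ^ i)"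
  using assms
proof (induction Q arbitrary: H d rule: finite_induct)
  case empty
  have "restrictions H {} \<subseteq> {\<lambda>_. undefined}" unfolding restrictions_def by auto
  from card_mono[OF _ this] have "card (restrictions H {}) \<le> 1" by simp
  moreover have "(\<Sum>i\<le>d. (card {} choose i) * K ^ i) = 1" for K :: nat
    by (induction d) auto
  ultimately show ?case by simp
next
  case (insert x Q)
  define K where "K = CARD('b) * (CARD('b) - 1)"
  define P where "P = {(a :: 'b, b). a \<noteq> b}"
  have twins_N_shatters: "Suc (card S) \<le> d"
    if "(a, b) \<in> P" "S \<subseteq> Q" "N_shatters (twins H Q x a b) S" for a b S
  proof -
    have "N_shatters H (insert x S)"
      using that insert.hyps(2) unfolding P_def by (intro N_shatters_insert_if_N_shatters_twins[of S Q]) auto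
    moreover have "insert x S \<subseteq> insert x Q" using that(2) by blast
    ultimately have "card (insert x S) \<le> d" using insert.prems(1) by simp
    moreover have "x \<notin> S" "finite S" using that(2) insert.hyps by (auto intro: finite_subset)
    ultimately show ?thesis by simp
  qed
  have step: "card (restrictions H (insert x Q)) \<le> card (restrictions H Q)
      + (\<Sum>(a, b)\<in>P. card (restrictions (twins H Q x a b) Q))"
    unfolding P_def using insert.hyps(1) by (rule card_restrictions_insert_le)
  have IH_H: "card (restrictions H Q) \<le> (\<Sum>i\<le>d. (card Q choose i) * K ^ i)"
    unfolding K_def using insert.prems by (intro insert.IH) auto
  show ?case
  proof (cases d)
    case 0
    have "twins H Q x a b = {}" if "(a, b) \<in> P" for a b
      using twins_N_shatters[OF that, of "{}"] 0 unfolding N_shatters_def by auto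
    then have "(\<Sum>(a, b)\<in>P. card (restrictions (twins H Q x a b) Q)) = 0"
      unfolding restrictions_def by (auto intro: sum.neutral)
    then show ?thesis using step IH_H 0 by simp
  next
    case (Suc e)
    have IH_twins: "card (restrictions (twins H Q x a b) Q) \<le> (\<Sum>i\<le>e. (card Q choose i) * K ^ i)"
      if "(a, b) \<in> P" for a b
      unfolding K_def using twins_N_shatters[OF that] Suc by (intro insert.IH) auto
    have "(\<Sum>(a, b)\<in>P. card (restrictions (twins H Q x a b) Q))
        \<le> (\<Sum>_\<in>P. \<Sum>i\<le>e. (card Q choose i) * K ^ i)"
      by (intro sum_mono) (use IH_twins in auto)
    also have "\<dots> = card P * (\<Sum>i\<le>e. (card Q choose i) * K ^ i)" by simp
    also have "card P = K" unfolding P_def K_def by (rule card_pairs_neq)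
    finally have "card (restrictions H (insert x Q))
        \<le> (\<Sum>i\<le>Suc e. (card Q choose i) * K ^ i) + K * (\<Sum>i\<le>e. (card Q choose i) * K ^ i)"
      using step IH_H unfolding Suc by linarith
    also have "\<dots> = (\<Sum>i\<le>d. (card (insert x Q) choose i) * K ^ i)"
      unfolding Suc card_insert_disjoint[OF insert.hyps] sum_choose_Suc_mult_pow ..
    finally show ?thesis unfolding K_def .
  qed
qed

section \<open>Locality of chain of thought\<close>

lemma CoT_Suc: "CoT (Suc t) f s = extend f (CoT t f s)"
  unfolding CoT_def by simp

lemma CoT_eq_append: "\<exists>y. CoT t f s = s @ y \<and> length y = t"
proof (induction t)
  case 0
  then show ?case by (simp add: CoT_def)
next
  case (Suc t)
  then obtain y where "CoT t f s = s @ y" "length y = t" by blast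
  then show ?case by (auto simp: CoT_Suc extend_def intro!: exI[of _ "y @ [f (s @ y)]"])
qed

lemma CoT_cong:
  assumes "\<And>y. length y < t \<Longrightarrow> f (s @ y) = g (s @ y)"
  shows "CoT t f s = CoT t g s"
  using assms
proof (induction t)
  case 0
  then show ?case by (simp add: CoT_def)
next
  case (Suc t)
  then have IH: "CoT t f s = CoT t g s" by simp
  obtain y where y: "CoT t f s = s @ y" "length y = t" using CoT_eq_append by blast
  then have "f (s @ y) = g (s @ y)" using Suc.prems by simp
  then show ?case using IH y by (simp add: CoT_Suc extend_def)
qed

definition prompts :: "nat \<Rightarrow> 's list set \<Rightarrow> 's list set" where
  "prompts T S = (\<lambda>(s, y). s @ y) ` (S \<times> {y. length y < T})"

lemma e2e_cong:
  assumes "\<forall>q\<in>prompts T S. f q = g q" "s \<in> S"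
  shows "e2e T f s = e2e T g s"
proof -
  have "s @ y \<in> prompts T S" if "length y < T" for y
    unfolding prompts_def using that assms(2) by (intro image_eqI[of _ _ "(s, y)"]) auto
  then have "CoT T f s = CoT T g s" using assms(1) by (intro CoT_cong) blast
  then show ?thesis unfolding e2e_def by simp
qed

lemma finite_lists_length_less: "finite {y :: 's::finite list. length y < T}"
proof (rule finite_subset)
  show "finite {y :: 's list. set y \<subseteq> UNIV \<and> length y \<le> T}"
    by (rule finite_lists_length_le) simp
qed auto

lemma card_lists_length_less: "card {y :: 's::finite list. length y < T} = (\<Sum>j<T. CARD('s) ^ j)"
proof -
  have fin: "finite {y :: 's list. length y = j}" for j
    using finite_lists_length_eq[of "UNIV :: 's set" j] by simp
  have card: "card {y :: 's list. length y = j} = CARD('s) ^ j" for j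
    using card_lists_length_eq[of "UNIV :: 's set" j] by simp
  have "{y :: 's list. length y < T} = (\<Union>j<T. {y. length y = j})" by auto
  also have "card \<dots> = (\<Sum>j<T. card {y :: 's list. length y = j})"
    by (rule card_UN_disjoint) (use fin in auto)
  finally show ?thesis by (simp add: card)
qed

lemma finite_prompts:
  assumes "finite S"
  shows "finite (prompts T (S :: 's::finite list set))"
  unfolding prompts_def using assms finite_lists_length_less by blast

lemma card_prompts_le:
  assumes "finite S"
  shows "card (prompts T (S :: 's::finite list set)) \<le> card S * (\<Sum>j<T. CARD('s) ^ j)"
proof -
  have "card (prompts T S) \<le> card (S \<times> {y :: 's list. length y < T})"
    unfolding prompts_def by (rule card_image_le) (use assms finite_lists_length_less in blast)
  then show ?thesis by (simp add: card_cartesian_product card_lists_length_less)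
qed

lemma card_restrictions_e2e_class_le:
  fixes F :: "('s::finite list \<Rightarrow> 's) set"
  assumes "finite S"
  shows "card (restrictions (e2e_class T F) S) \<le> card (restrictions F (prompts T S))"
proof -
  have "restrict (e2e T f) S = restrict (e2e T (restrict f (prompts T S))) S" for f
    by (intro restrict_ext e2e_cong) auto
  then have "restrictions (e2e_class T F) S
      = (\<lambda>r. restrict (e2e T r) S) ` restrictions F (prompts T S)"
    unfolding restrictions_def e2e_class_def image_image by simp
  then show ?thesis
    using card_image_le finite_restrictions[OF finite_prompts[OF assms]] by metis
qed

lemma two_pow_card_le_sum_choose_if_N_shatters_e2e_class:
  fixes F :: "('s::finite list \<Rightarrow> 's) set"
  assumes "Ndim F \<le> enat d" "finite S" "N_shatters (e2e_class T F) S"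
  shows "2 ^ card S
    \<le> (\<Sum>i\<le>d. (card S * (\<Sum>j<T. CARD('s) ^ j) choose i) * (CARD('s) * (CARD('s) - 1)) ^ i)"
proof -
  have "2 ^ card S \<le> card (restrictions (e2e_class T F) S)"
    using assms(2,3) by (rule two_pow_card_le_card_restrictions)
  also have "\<dots> \<le> card (restrictions F (prompts T S))"
    using assms(2) by (rule card_restrictions_e2e_class_le)
  also have "\<dots> \<le> (\<Sum>i\<le>d. (card (prompts T S) choose i) * (CARD('s) * (CARD('s) - 1)) ^ i)"
    using finite_prompts[OF assms(2)]
    by (rule card_restrictions_le_sum_choose)
      (use assms(1) card_le_if_Ndim_le finite_subset finite_prompts[OF assms(2)] in blast)
  also have "\<dots> \<le> (\<Sum>i\<le>d. (card S * (\<Sum>j<T. CARD('s) ^ j) choose i) * (CARD('s) * (CARD('s) - 1)) ^ i)"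
    using card_prompts_le[OF assms(2)] by (intro sum_mono mult_right_mono binomial_right_mono) auto
  finally show ?thesis .
qed

section \<open>Numerical estimates\<close>

lemma sum_choose_le_choose_add: "(\<Sum>i\<le>d. n choose i) \<le> (n + d) choose d"
proof (induction d)
  case 0
  then show ?case by simp
next
  case (Suc d)
  have "(\<Sum>i\<le>Suc d. n choose i) \<le> ((n + d) choose d) + ((n + d) choose Suc d)"
    using Suc binomial_right_mono[of n "n + d" "Suc d"] by simp
  also have "\<dots> = (n + Suc d) choose Suc d" by simp
  finally show ?case .
qed

lemma pow_le_three_pow_mult_fact: "d ^ d \<le> 3 ^ d * fact d"
proof (induction d)
  case 0
  then show ?case by simp
next
  case (Suc d)
  have "(real d + 1) ^ d \<le> 3 * real d ^ d"
  proof (cases "d = 0")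
    case False
    have "(1 + 1 / real d) ^ d \<le> exp 1"
      using False by (intro exp_ge_one_plus_x_over_n_power_n) auto
    also have "\<dots> \<le> 3" using e_less_272 by simp
    finally show ?thesis
      using False by (simp add: field_simps power_divide)
  qed simp
  have "real (Suc d ^ Suc d) = (real d + 1) * (real d + 1) ^ d" by (simp add: algebra_simps)
  also have "\<dots> \<le> (real d + 1) * (3 * real d ^ d)"
    using \<open>(real d + 1) ^ d \<le> 3 * real d ^ d\<close> by (intro mult_left_mono) auto
  also have "\<dots> \<le> (real d + 1) * (3 * (3 ^ d * fact d))"
  proof -
    have "real (d ^ d) \<le> real (3 ^ d * fact d)" using Suc.IH by (simp only: of_nat_le_iff)
    then show ?thesis by (intro mult_left_mono) simp_all
  qed
  also have "\<dots> = real (3 ^ Suc d * fact (Suc d))" by (simp add: algebra_simps)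
  finally show ?case by (simp only: of_nat_le_iff)
qed

lemma pow_mult_choose_le: "d ^ d * (N choose d) \<le> (3 * N) ^ d"
proof -
  have "d ^ d * (N choose d) \<le> 3 ^ d * ((N choose d) * fact d)"
    using pow_le_three_pow_mult_fact[of d] by (simp add: mult_right_mono)
  also have "\<dots> \<le> 3 ^ d * N ^ d" by (simp add: binomial_fact_pow)
  finally show ?thesis by (simp add: power_mult_distrib)
qed

lemma pow_mult_sum_choose_mult_pow_le:
  fixes K :: nat
  assumes "1 \<le> K"
  shows "d ^ d * (\<Sum>i\<le>d. (n choose i) * K ^ i) \<le> (3 * K * (n + d)) ^ d"
proof -
  have "(\<Sum>i\<le>d. (n choose i) * K ^ i) \<le> (\<Sum>i\<le>d. (n choose i) * K ^ d)"
    using assms by (intro sum_mono mult_left_mono power_increasing) auto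
  also have "\<dots> = K ^ d * (\<Sum>i\<le>d. n choose i)" by (simp add: sum_distrib_left mult.commute)
  also have "\<dots> \<le> K ^ d * ((n + d) choose d)" by (simp add: sum_choose_le_choose_add)
  finally have "d ^ d * (\<Sum>i\<le>d. (n choose i) * K ^ i) \<le> K ^ d * (d ^ d * ((n + d) choose d))"
    by (metis mult.left_commute mult_le_mono2)
  also have "\<dots> \<le> K ^ d * (3 * (n + d)) ^ d" by (intro mult_left_mono pow_mult_choose_le) simp
  also have "\<dots> = (3 * K * (n + d)) ^ d" by (simp add: power_mult_distrib ac_simps)
  finally show ?thesis .
qed

lemma sum_pow_lessThan_less_pow:
  fixes k :: nat
  assumes "2 \<le> k"
  shows "(\<Sum>j<T. k ^ j) < k ^ T"
proof (induction T)
  case 0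
  then show ?case by simp
next
  case (Suc T)
  then have "(\<Sum>j<Suc T. k ^ j) < 2 * k ^ T" by simp
  also have "\<dots> \<le> k ^ Suc T" using assms by simp
  finally show ?case .
qed

lemma six_mul_le_two_pow:
  assumes "1 \<le> T"
  shows "6 * ((6 * T + 1) * (2 ^ T - 1) + 1) \<le> (2::nat) ^ (6 * T)"
  using assms
proof (induction T rule: dec_induct)
  case base
  then show ?case by simp
next
  case (step T)
  define q where "q = (2::nat) ^ T - 1"
  have q: "(2::nat) ^ T = q + 1" unfolding q_def by simp
  have "(2::nat) ^ T \<ge> 2 ^ 1" using step(1) by (intro power_increasing) auto
  then have "1 \<le> q" unfolding q_def by simp
  then have "T \<le> T * q" by simp
  have "6 * ((6 * Suc T + 1) * (2 ^ Suc T - 1) + 1) = 6 * (12 * (T * q) + 6 * T + 14 * q + 8)"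
  proof -
    have "(2::nat) ^ Suc T - 1 = 2 * q + 1" using q by simp
    then show ?thesis by (simp add: algebra_simps)
  qed
  also have "\<dots> \<le> 6 * (18 * (T * q) + 14 * q + 8)"
    using \<open>T \<le> T * q\<close> by simp
  also have "\<dots> \<le> 64 * (6 * ((6 * T + 1) * q + 1))" by (simp add: algebra_simps)
  also have "\<dots> \<le> 64 * 2 ^ (6 * T)" using step.IH unfolding q_def by simp
  also have "\<dots> = 2 ^ (6 * Suc T)" by (simp add: power_add)
  finally show ?case .
qed

lemma three_mul_lt_two_powr:
  fixes r :: real
  assumes "9 \<le> r"
  shows "3 * r < 2 powr (2 * r / 3)"
proof -
  define j where "j = nat \<lfloor>r / 3\<rfloor>"
  have j3: "3 \<le> j" using assms unfolding j_def by linarith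
  have "real j \<le> r / 3" "r / 3 < real j + 1" using assms unfolding j_def by linarith+
  then have j: "3 * real j \<le> r" "r < 3 * real j + 3" by simp_all
  have "9 * (j + 1) < 4 ^ j" if "3 \<le> j" for j :: nat
    using that
  proof (induction j rule: dec_induct)
    case base
    then show ?case by simp
  next
    case (step j)
    then show ?case by simp
  qed
  then have "real (9 * (j + 1)) < real (4 ^ j)" using j3 by (simp only: of_nat_less_iff)
  then have "9 * (real j + 1) < 4 ^ j" by simp
  have "3 * r < 9 * (real j + 1)" using j by simp
  also have "\<dots> < 4 ^ j" by fact
  also have "(4::real) ^ j = 2 powr (2 * real j)"
    by (simp add: powr_realpow[symmetric] powr_mult powr_powr[symmetric])
  also have "\<dots> \<le> 2 powr (2 * r / 3)" using j by (intro powr_mono) auto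
  finally show ?thesis .
qed

lemma le_of_two_powr_le_mult_two_powr:
  fixes r a :: real and T :: nat
  assumes "1 \<le> T" "1 \<le> a" "2 powr r \<le> 3 * r * 2 powr ((real T + 2) * a)"
  shows "r \<le> 9 * real T * a"
proof (rule ccontr)
  assume "\<not> r \<le> 9 * real T * a"
  then have r: "9 * real T * a < r" by simp
  have "1 \<le> real T" using assms(1) by simp
  then have "1 \<le> real T * a" using mult_mono[of 1 "real T" 1 a] assms(2) by simp
  then have "9 \<le> 9 * real T * a" by simp
  then have "3 * r < 2 powr (2 * r / 3)" using r by (intro three_mul_lt_two_powr) simp
  moreover have "real T + 2 \<le> 3 * real T" using assms(1) by simp
  then have "(real T + 2) * a \<le> 3 * real T * a" using assms(2) by (intro mult_right_mono) auto
  then have "(real T + 2) * a \<le> r / 3" using r by simp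
  then have "2 powr ((real T + 2) * a) \<le> 2 powr (r / 3)" by (intro powr_mono) auto
  ultimately have "3 * r * 2 powr ((real T + 2) * a) < 2 powr (2 * r / 3) * 2 powr (r / 3)"
    using r \<open>9 \<le> 9 * real T * a\<close> by (intro mult_less_le_imp_less) auto
  also have "\<dots> = 2 powr r" by (simp flip: powr_add)
  finally show False using assms(3) by simp
qed

lemma le_of_pow_mult_two_pow_le:
  fixes a :: real and T :: nat
  assumes "1 \<le> T" "1 \<le> a" "0 < d"
    and "real d ^ d * 2 ^ m \<le> (3 * real m * 2 powr ((real T + 2) * a)) ^ d"
  shows "real m \<le> 9 * real T * real d * a"
proof -
  define r where "r = real m / real d"
  have "(real d * 2 powr r) ^ d = real d ^ d * 2 powr (real d * r)"
    by (simp add: power_mult_distrib powr_power)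
  also have "\<dots> = real d ^ d * 2 ^ m" unfolding r_def using assms(3) by (simp add: powr_realpow)
  finally have "(real d * 2 powr r) ^ d \<le> (3 * real m * 2 powr ((real T + 2) * a)) ^ d"
    using assms(4) by simp
  moreover obtain n where "d = Suc n" using assms(3) gr0_implies_Suc by blast
  ultimately have "real d * 2 powr r \<le> 3 * real m * 2 powr ((real T + 2) * a)"
    using power_le_imp_le_base by fastforce
  then have "2 powr r \<le> 3 * r * 2 powr ((real T + 2) * a)"
    unfolding r_def using assms(3) by (simp add: pos_le_divide_eq mult.commute)
  then have "r \<le> 9 * real T * a" by (rule le_of_two_powr_le_mult_two_powr[OF assms(1,2)])
  then show ?thesis unfolding r_def using assms(3) by (simp add: pos_divide_le_eq ac_simps)
qed

lemma exp_one_mult_ln_two_le: "exp 1 * ln 2 \<le> (2::real)"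
proof -
  have "exp 1 * ln 2 \<le> (272 / 100) * (25 / 36 :: real)"
    using e_less_272 ln2_le_25_over_36 ln2_ge_two_thirds by (intro mult_mono) auto
  then show ?thesis by simp
qed

section \<open>Dimension bounds for end-to-end classes\<close>

lemma card_le_if_N_shatters_e2e_class_bool:
  fixes F :: "(bool list \<Rightarrow> bool) set"
  assumes "1 \<le> T" "Ndim F \<le> enat d" "finite S" "N_shatters (e2e_class T F) S"
  shows "card S \<le> 6 * T * d"
proof (rule ccontr)
  define m where "m = 6 * T * d + 1"
  define M where "M = (6 * T + 1) * (2 ^ T - 1) + 1"
  assume "\<not> card S \<le> 6 * T * d"
  then obtain S' where S': "S' \<subseteq> S" "card S' = m"
    unfolding m_def by (metis Suc_eq_plus1 not_less_eq_eq obtain_subset_with_card_n)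
  have "(\<Sum>j<T. 2 ^ j) = (2::nat) ^ T - 1" using sum_power2 by (simp add: atLeast0LessThan)
  then have "2 ^ m \<le> (\<Sum>i\<le>d. (m * (2 ^ T - 1) choose i) * 2 ^ i)"
    using two_pow_card_le_sum_choose_if_N_shatters_e2e_class[of F d S' T] assms(2)
      N_shatters_subset[OF assms(4) S'(1)] finite_subset[OF S'(1) assms(3)] S'(2)
    by simp
  then have "d ^ d * 2 ^ m \<le> d ^ d * (\<Sum>i\<le>d. (m * (2 ^ T - 1) choose i) * 2 ^ i)"
    by (rule mult_le_mono2)
  also have "\<dots> \<le> (3 * 2 * (m * (2 ^ T - 1) + d)) ^ d"
    by (rule pow_mult_sum_choose_mult_pow_le) simp
  also have "\<dots> \<le> (d * (6 * M)) ^ d"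
  proof (cases "d = 0")
    case False
    define q :: nat where "q = 2 ^ T - 1"
    have "m * q + d \<le> d * ((6 * T + 1) * q + 1)"
      unfolding m_def using False by (simp add: algebra_simps)
    then have "m * (2 ^ T - 1) + d \<le> d * M" unfolding M_def q_def .
    then show ?thesis by (intro power_mono) auto
  qed simp
  also have "\<dots> \<le> d ^ d * 2 ^ (6 * T * d)"
    using six_mul_le_two_pow[OF assms(1)] unfolding M_def
    by (simp add: power_mult_distrib power_mult power_mono)
  also have "\<dots> < d ^ d * 2 ^ m"
    unfolding m_def by (cases "d = 0") auto
  finally show False by simp
qed

lemma VCdim_e2e_class_le:
  fixes F :: "(bool list \<Rightarrow> bool) set"
  assumes "1 \<le> T"
  shows "VCdim (e2e_class T F) \<le> enat (6 * T) * VCdim F"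
proof (cases "VCdim F")
  case infinity
  then show ?thesis using assms by simp
next
  case (enat d)
  then have "Ndim F \<le> enat d" by (simp add: VCdim_eq_Ndim)
  then have "Ndim (e2e_class T F) \<le> enat (6 * T * d)"
    using card_le_if_N_shatters_e2e_class_bool[OF assms] by (intro Ndim_le_enatI)
  then show ?thesis using enat by (simp add: VCdim_eq_Ndim)
qed

lemma pow_mult_two_pow_card_le_if_N_shatters_e2e_class:
  fixes F :: "('s::finite list \<Rightarrow> 's) set"
  assumes "2 \<le> CARD('s)" "Ndim F \<le> enat d" "finite S" "N_shatters (e2e_class T F) S"
    and "d \<le> card S"
  shows "d ^ d * 2 ^ card S \<le> (3 * card S * CARD('s) ^ (T + 2)) ^ d"
proof -
  define k where "k = CARD('s)"
  define m where "m = card S"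
  define G where "G = (\<Sum>j<T. k ^ j)"
  have "d ^ d * 2 ^ m \<le> d ^ d * (\<Sum>i\<le>d. (m * G choose i) * (k * (k - 1)) ^ i)"
    using two_pow_card_le_sum_choose_if_N_shatters_e2e_class[OF assms(2-4)]
    unfolding m_def G_def k_def by simp
  also have "\<dots> \<le> (3 * (k * (k - 1)) * (m * G + d)) ^ d"
    using assms(1) unfolding k_def by (intro pow_mult_sum_choose_mult_pow_le) simp
  also have "\<dots> \<le> (3 * k ^ 2 * (m * k ^ T)) ^ d"
  proof -
    have "m * G + d \<le> m * (G + 1)" using assms(5) unfolding m_def by simp
    also have "\<dots> \<le> m * k ^ T"
      using sum_pow_lessThan_less_pow[of k T] assms(1) unfolding G_def k_def
      by (intro mult_left_mono) auto
    finally have "m * G + d \<le> m * k ^ T" .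
    moreover have "k * (k - 1) \<le> k ^ 2" by (simp add: power2_eq_square)
    ultimately show ?thesis by (intro power_mono mult_le_mono) auto
  qed
  also have "3 * k ^ 2 * (m * k ^ T) = 3 * m * k ^ (T + 2)"
    by (simp add: power_add power2_eq_square ac_simps)
  finally show ?thesis unfolding m_def k_def .
qed

lemma card_le_if_N_shatters_e2e_class:
  fixes F :: "('s::finite list \<Rightarrow> 's) set"
  assumes "1 \<le> T" "2 \<le> CARD('s)" "Ndim F \<le> enat d" "finite S" "N_shatters (e2e_class T F) S"
  shows "real (card S) \<le> 9 * real T * real d * log 2 CARD('s)"
proof -
  define a where "a = log 2 CARD('s)"
  define m where "m = card S"
  have a1: "1 \<le> a" unfolding a_def using assms(2) by simp
  have "1 \<le> real T * a" using assms(1) a1 mult_mono[of 1 "real T" 1 a] by simp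
  show ?thesis
  proof (cases "m \<le> d")
    case True
    then have "real m \<le> real d * 1" by simp
    also have "\<dots> \<le> real d * (9 * real T * a)" using \<open>1 \<le> real T * a\<close> by (intro mult_left_mono) auto
    finally show ?thesis unfolding m_def a_def by (simp add: ac_simps)
  next
    case False
    have "d ^ d * 2 ^ m \<le> (3 * m * CARD('s) ^ (T + 2)) ^ d"
      using pow_mult_two_pow_card_le_if_N_shatters_e2e_class[OF assms(2-5)] False
      unfolding m_def by simp
    then have "real (d ^ d * 2 ^ m) \<le> real ((3 * m * CARD('s) ^ (T + 2)) ^ d)"
      by (simp only: of_nat_le_iff)
    moreover have "real CARD('s) ^ (T + 2) = 2 powr ((real T + 2) * a)"
    proof -
      have "2 powr ((real T + 2) * a) = (2 powr a) powr real (T + 2)" by (simp add: powr_powr ac_simps)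
      also have "2 powr a = real CARD('s)" unfolding a_def using assms(2) by simp
      also have "\<dots> powr real (T + 2) = real CARD('s) ^ (T + 2)"
        using assms(2) by (intro powr_realpow) simp
      finally show ?thesis ..
    qed
    ultimately have real_bound: "real d ^ d * 2 ^ m \<le> (3 * real m * 2 powr ((real T + 2) * a)) ^ d"
      by simp
    have "0 < d"
    proof (rule ccontr)
      assume "\<not> 0 < d"
      then have "(2::real) ^ m \<le> 1" using real_bound by simp
      then show False using False by (simp add: power_le_one_iff)
    qed
    then show ?thesis
      using le_of_pow_mult_two_pow_le[OF assms(1) a1 _ real_bound] unfolding m_def a_def by simp
  qed
qed

lemma Ndim_e2e_class_le:
  fixes F :: "('s::finite list \<Rightarrow> 's) set"
  assumes "1 \<le> T" "Ndim F = enat d"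
  shows "\<exists>n. Ndim (e2e_class T F) = enat n \<and>
    real n \<le> 9 * real T * real d * log 2 (2 * real d * real CARD('s) / (exp 1 * ln 2))"
proof (cases "CARD('s) = 1")
  case True
  then have "d = 0" using Ndim_eq_0_if_CARD_eq_1[where H = F] assms(2) by (simp add: zero_enat_def)
  then show ?thesis using Ndim_eq_0_if_CARD_eq_1[OF True] by (simp add: zero_enat_def)
next
  case False
  moreover have "0 < CARD('s)" by simp
  ultimately have k2: "2 \<le> CARD('s)" by linarith
  have "real d * log 2 CARD('s) \<le> real d * log 2 (2 * real d * real CARD('s) / (exp 1 * ln 2))"
  proof (cases "d = 0")
    case False
    have "exp 1 * ln 2 \<le> 2 * real d" using exp_one_mult_ln_two_le False by linarith
    then have "real CARD('s) \<le> 2 * real d * real CARD('s) / (exp 1 * ln 2)"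
      by (simp add: field_simps mult_left_mono)
    then show ?thesis using k2 by (intro mult_left_mono log_mono) auto
  qed simp
  then have mono: "9 * real T * real d * log 2 CARD('s)
      \<le> 9 * real T * real d * log 2 (2 * real d * real CARD('s) / (exp 1 * ln 2))"
    unfolding mult.assoc[of "9 * real T"] by (rule mult_left_mono) simp
  have "0 \<le> 9 * real T * real d * log 2 CARD('s)" using k2 by simp
  show ?thesis
  proof (rule Ndim_eq_enat_le_if_card_le)
    show "0 \<le> 9 * real T * real d * log 2 (2 * real d * real CARD('s) / (exp 1 * ln 2))"
      using mono \<open>0 \<le> 9 * real T * real d * log 2 CARD('s)\<close> by linarith
    show "real (card S) \<le> 9 * real T * real d * log 2 (2 * real d * real CARD('s) / (exp 1 * ln 2))"
      if "finite S" "N_shatters (e2e_class T F) S" for S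
      using card_le_if_N_shatters_e2e_class[of T F d, OF assms(1) k2 _ that] assms(2) mono
      by simp
  qed
qed

theorem theoremB1:
  fixes T :: nat
  assumes "T \<ge> 1"
  shows "(\<forall>F :: (bool list \<Rightarrow> bool) set.
            VCdim (e2e_class T F) \<le> enat (6 * T) * VCdim F)
       \<and> (\<forall>(F :: ('s::finite list \<Rightarrow> 's) set) d.
            card (UNIV :: 's set) \<noteq> 2 \<longrightarrow> Ndim F = enat d \<longrightarrow>
            (\<exists>n. Ndim (e2e_class T F) = enat n \<and>
               real n \<le> 9 * real T * real d *
                 log 2 (2 * real d * real (card (UNIV :: 's set)) / (exp 1 * ln 2))))"
  using VCdim_e2e_class_le[OF assms] Ndim_e2e_class_le[OF assms] by blast

end
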